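(* Let $n,m\in\mathbb{N}$, $f:\mathbb{F}_2^n\to\mathbb{F}_2$, $S\subseteq\mathbb{F}_2^n$, and let $g$ be the indicator function of $S$. Let $p=2^{-n}\sum_{\mathbf{x}\in S}|\mathcal{H}^{(m)}_f(\mathbf{x})|^2$. Then when the three-query algorithm $A^{(m)3,3}_n(g,f,f)$ is executed, the probability that the measured $n$-bit outcome is different from $0^n$ (i.e. contains at least one $1$) equals $4p-4p^2$.
   Context: $\zeta_m=e^{2\pi i/m}$, $\overline{\zeta_m}$ its complex conjugate; $wt$ is Hamming weight; $\mathbf{x}\cdot\mathbf{y}=\bigoplus_i x_iy_i$. The $m$-Hadamard transform is $\mathcal{H}^{(m)}_f(\boldsymbol{\omega})=2^{-n/2}\sum_{\mathbf{x}}(-1)^{f(\mathbf{x})\oplus\mathbf{x}\cdot\boldsymbol{\omega}}\zeta_m^{wt(\mathbf{x})}$. Gates: $\mathrm{H}$ Hadamard; $\Omega_m=\frac{1}{\sqrt2}\begin{pmatrix}1&\zeta_m\\1&-\zeta_m\end{pmatrix}$; $\overline{\Omega}_m=\frac{1}{\sqrt2}\begin{pmatrix}1&\overline{\zeta_m}\\1&-\overline{\zeta_m}\end{pmatrix}$; $U_f$ is the phase oracle $\ket{\mathbf{x}}\mapsto(-1)^{f(\mathbf{x})}\ket{\mathbf{x}}$. Algorithm $A^{(m)3,3}_n(f_1,f_2,f_3)$: starting from $\ket{0^n}$, apply in order $\mathrm{H}^{\otimes n}$, $U_{f_2}$, $\Omega_m^{\otimes n}$, $U_{f_1}$, $\mathrm{H}^{\otimes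 n}$, $U_{f_3}$, $\overline{\Omega}_m^{\otimes n}$, then measure all $n$ qubits in the computational basis. *)

theory Defs
  imports Complex_Main
begin

text \<open>n-bit strings (elements of F_2^n) are boolean lists of length n;
  False = 0, True = 1.  An n-qubit state is a function from bit strings to complex amplitudes
  (only its values on bitstrings n matter).\<close>

definition bitstrings :: "nat \<Rightarrow> bool list set" where
  "bitstrings n = {xs. length xs = n}"

definition sgn1 :: "bool \<Rightarrow> complex" where
  "sgn1 b = (if b then -1 else 1)"

definition zeta :: "nat \<Rightarrow> complex" where
  "zeta m = exp (2 * of_real pi * \<i> / of_nat m)"

definition wt :: "bool list \<Rightarrow> nat" where
  "wt x = length (filter id x)"

definition dotp :: "bool list \<Rightarrow> bool list \<Rightarrow> bool" where
  "dotp x y = odd (length (filter id (map2 (\<and>) x y)))"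

definition mhadamard :: "nat \<Rightarrow> nat \<Rightarrow> (bool list \<Rightarrow> bool) \<Rightarrow> bool list \<Rightarrow> complex" where
  "mhadamard m n f \<omega> =
     (1 / of_real (sqrt (2 ^ n))) *
     (\<Sum>x\<in>bitstrings n. sgn1 (f x \<noteq> dotp x \<omega>) * zeta m ^ wt x)"

text \<open>Single-qubit gates as matrices G out in (row = output bit, column = input bit).\<close>
definition gH :: "bool \<Rightarrow> bool \<Rightarrow> complex" where
  "gH out inp = sgn1 (out \<and> inp) / of_real (sqrt 2)"

definition gOmega :: "complex \<Rightarrow> bool \<Rightarrow> bool \<Rightarrow> complex" where
  "gOmega z out inp = (if inp then (if out then - z else z) else 1) / of_real (sqrt 2)"

definition tensor_gate :: "nat \<Rightarrow> (bool \<Rightarrow> bool \<Rightarrow> complex) \<Rightarrow> (bool list \<Rightarrow> complex) \<Rightarrow> bool list \<Rightarrow> complex" where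
  "tensor_gate n G \<psi> y = (\<Sum>x\<in>bitstrings n. (\<Prod>i<n. G (y ! i) (x ! i)) * \<psi> x)"

definition phase_oracle :: "(bool list \<Rightarrow> bool) \<Rightarrow> (bool list \<Rightarrow> complex) \<Rightarrow> bool list \<Rightarrow> complex" where
  "phase_oracle f \<psi> x = sgn1 (f x) * \<psi> x"

definition init_state :: "nat \<Rightarrow> bool list \<Rightarrow> complex" where
  "init_state n x = (if x = replicate n False then 1 else 0)"

definition alg33_state :: "nat \<Rightarrow> nat \<Rightarrow> (bool list \<Rightarrow> bool) \<Rightarrow> (bool list \<Rightarrow> bool)
    \<Rightarrow> (bool list \<Rightarrow> bool) \<Rightarrow> bool list \<Rightarrow> complex" where
  "alg33_state m n f1 f2 f3 =
     tensor_gate n (gOmega (cnj (zeta m)))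
      (phase_oracle f3
        (tensor_gate n gH
          (phase_oracle f1
            (tensor_gate n (gOmega (zeta m))
              (phase_oracle f2
                (tensor_gate n gH (init_state n)))))))"

definition alg33_prob :: "nat \<Rightarrow> nat \<Rightarrow> (bool list \<Rightarrow> bool) \<Rightarrow> (bool list \<Rightarrow> bool)
    \<Rightarrow> (bool list \<Rightarrow> bool) \<Rightarrow> bool list \<Rightarrow> real" where
  "alg33_prob m n f1 f2 f3 y = (cmod (alg33_state m n f1 f2 f3 y))\<^sup>2"

end

theory Submission
  imports Defs
begin

text \<open>Let V be the first half \<open>\<Omega>\<^sub>m\<^sup>\<otimes>\<^sup>n U\<^sub>f H\<^sup>\<otimes>\<^sup>n\<close> of the circuit. The amplitudes of
  \<open>\<psi> = V|0\<^sup>n\<rangle>\<close> are the m-Hadamard coefficients of f scaled by \<open>2\<^sup>-\<^sup>n\<^sup>/\<^sup>2\<close>, so the weight of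
  \<open>\<psi>\<close> on S is p. The second half, \<open>\<Omega>\<^sub>m\<^sup>\<otimes>\<^sup>n U\<^sub>f H\<^sup>\<otimes>\<^sup>n\<close> with \<open>\<zeta>\<^sub>m\<close> conjugated, is the entrywise
  conjugate of V; as the Walsh kernel is symmetric, its \<open>0\<^sup>n\<close>-row is the conjugate of the
  column \<open>\<psi>\<close>. So the final amplitude of \<open>0\<^sup>n\<close> is \<open>\<langle>\<psi>|U\<^sub>g|\<psi>\<rangle> = 1 - 2p\<close>, and since every gate
  is unitary the other outcomes have total probability \<open>1 - (1 - 2p)\<^sup>2 = 4p - 4p\<^sup>2\<close>.\<close>

lemma sgn1_neq: "sgn1 (a \<noteq> b) = sgn1 a * sgn1 b"
  by (auto simp: sgn1_def)

lemma sgn1_eq_Not: "sgn1 (a = (\<not> b)) = sgn1 a * sgn1 b"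
  by (auto simp: sgn1_def)

lemma sgn1_conj_True: "sgn1 (True \<and> a) = sgn1 a"
  and sgn1_conj_False: "sgn1 (False \<and> a) = 1"
  by (auto simp: sgn1_def)

lemma cnj_sgn1 [simp]: "cnj (sgn1 b) = sgn1 b"
  and norm_sgn1 [simp]: "cmod (sgn1 b) = 1"
  by (auto simp: sgn1_def)

lemma wt_Cons: "wt (a # x) = (if a then 1 else 0) + wt x"
  by (simp add: wt_def)

lemma dotp_Cons: "dotp (a # x) (b # y) = ((a \<and> b) \<noteq> dotp x y)"
  by (auto simp: dotp_def)

lemma dotp_Nil [simp]: "dotp [] y = False" "dotp y [] = False"
  by (auto simp: dotp_def)

lemma dotp_commute: "dotp x y = dotp y x"
proof (induction x arbitrary: y)
  case Nil
  then show ?case by simp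
next
  case (Cons a x)
  then show ?case by (cases y) (auto simp: dotp_Cons)
qed

lemma dotp_replicate_False [simp]: "dotp y (replicate k False) = False"
proof (induction y arbitrary: k)
  case Nil
  then show ?case by simp
next
  case (Cons a y)
  then show ?case by (cases k) (auto simp: dotp_Cons)
qed

lemma finite_bitstrings [simp]: "finite (bitstrings n)"
  using finite_lists_length_eq[of "UNIV :: bool set" n] by (simp add: bitstrings_def)

lemma replicate_False_in_bitstrings [simp]: "replicate n False \<in> bitstrings n"
  by (simp add: bitstrings_def)

lemma bitstrings_Suc: "bitstrings (Suc n) = Cons True ` bitstrings n \<union> Cons False ` bitstrings n"
  by (auto simp: bitstrings_def length_Suc_conv)

lemma sum_bitstrings_Suc:
  "sum F (bitstrings (Suc n)) =
     (\<Sum>x\<in>bitstrings n. F (True # x)) + (\<Sum>x\<in>bitstrings n. F (False # x))"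
  unfolding bitstrings_Suc by (subst sum.union_disjoint) (auto simp: sum.reindex)

lemma sum_sgn1_dotp_orthogonal:
  assumes "x \<in> bitstrings n" "w \<in> bitstrings n"
  shows "(\<Sum>y\<in>bitstrings n. sgn1 (dotp y x) * sgn1 (dotp y w)) = (if x = w then 2 ^ n else 0)"
  using assms
proof (induction n arbitrary: x w)
  case 0
  then show ?case by (simp add: bitstrings_def sgn1_def)
next
  case (Suc n)
  then obtain a x' b w' where x: "x = a # x'" and w: "w = b # w'"
    and x'w': "x' \<in> bitstrings n" "w' \<in> bitstrings n"
    by (auto simp: bitstrings_def length_Suc_conv)
  let ?\<sigma> = "\<lambda>y. sgn1 (dotp y x') * sgn1 (dotp y w')"
  have "(\<Sum>y\<in>bitstrings (Suc n). sgn1 (dotp y x) * sgn1 (dotp y w))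
      = (\<Sum>y\<in>bitstrings n. (sgn1 a * sgn1 b) * ?\<sigma> y) + (\<Sum>y\<in>bitstrings n. ?\<sigma> y)"
    unfolding sum_bitstrings_Suc x w dotp_Cons sgn1_neq
    by (simp only: sgn1_conj_True sgn1_conj_False mult_1_left mult_ac)
  also have "\<dots> = (sgn1 a * sgn1 b + 1) * (\<Sum>y\<in>bitstrings n. ?\<sigma> y)"
    by (simp add: sum_distrib_left[symmetric] distrib_right)
  also have "\<dots> = (if x = w then 2 ^ Suc n else 0)"
    using Suc.IH[OF x'w'] by (auto simp: x w sgn1_def)
  finally show ?case .
qed

definition walsh :: "nat \<Rightarrow> bool list \<Rightarrow> bool list \<Rightarrow> complex" where
  "walsh n y x = sgn1 (dotp y x) / of_real (sqrt (2 ^ n))"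

lemma walsh_commute: "walsh n y x = walsh n x y"
  by (simp add: walsh_def dotp_commute)

lemma cnj_walsh [simp]: "cnj (walsh n y x) = walsh n y x"
  by (simp add: walsh_def)

lemma walsh_replicate_False [simp]:
  "walsh n (replicate n False) x = 1 / of_real (sqrt (2 ^ n))"
  "walsh n x (replicate n False) = 1 / of_real (sqrt (2 ^ n))"
  by (simp_all add: walsh_def dotp_commute[of "replicate n False"] sgn1_def)

lemma sum_walsh_orthonormal:
  assumes "x \<in> bitstrings n" "w \<in> bitstrings n"
  shows "(\<Sum>y\<in>bitstrings n. walsh n y x * walsh n y w) = (if x = w then 1 else 0)"
proof -
  have sqrt_sq: "of_real (sqrt (2 ^ n)) * of_real (sqrt (2 ^ n)) = (2 ^ n :: complex)"
    by (metis of_real_mult of_real_numeral of_real_power real_sqrt_pow2 zero_le_numeral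
        zero_le_power power2_eq_square)
  have "(\<Sum>y\<in>bitstrings n. walsh n y x * walsh n y w)
      = (\<Sum>y\<in>bitstrings n. sgn1 (dotp y x) * sgn1 (dotp y w)) / 2 ^ n"
    by (simp add: walsh_def sum_divide_distrib sqrt_sq)
  then show ?thesis
    using sum_sgn1_dotp_orthogonal[OF assms] by simp
qed

lemma gH_eq_gOmega_1: "gH = gOmega 1"
  by (auto simp: fun_eq_iff gH_def gOmega_def sgn1_def)

lemma prod_gOmega:
  assumes "length x = n" "length y = n"
  shows "(\<Prod>i<n. gOmega z (y ! i) (x ! i)) = z ^ wt x * sgn1 (dotp y x) / of_real (sqrt 2) ^ n"
  using assms
proof (induction n arbitrary: x y)
  case 0
  then show ?case by (simp add: sgn1_def wt_def)
next
  case (Suc n)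
  then obtain a x' b y' where x: "x = a # x'" and y: "y = b # y'"
    and len: "length x' = n" "length y' = n"
    by (metis length_Suc_conv)
  have "(\<Prod>i<Suc n. gOmega z (y ! i) (x ! i)) = gOmega z b a * (\<Prod>i<n. gOmega z (y' ! i) (x' ! i))"
    by (subst prod.lessThan_Suc_shift) (simp add: x y)
  also have "\<dots> = z ^ wt x * sgn1 (dotp y x) / of_real (sqrt 2) ^ Suc n"
    using Suc.IH[OF len] by (simp add: x y dotp_Cons sgn1_neq gOmega_def wt_Cons sgn1_def)
  finally show ?case .
qed

lemma tensor_gate_gOmega:
  assumes "y \<in> bitstrings n"
  shows "tensor_gate n (gOmega z) \<psi> y = (\<Sum>x\<in>bitstrings n. walsh n y x * (z ^ wt x * \<psi> x))"
  unfolding tensor_gate_def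
  using assms by (intro sum.cong) (auto simp: prod_gOmega bitstrings_def walsh_def real_sqrt_power)

lemma tensor_gate_gH:
  assumes "y \<in> bitstrings n"
  shows "tensor_gate n gH \<psi> y = (\<Sum>x\<in>bitstrings n. walsh n y x * \<psi> x)"
  using tensor_gate_gOmega[OF assms, of 1] by (simp add: gH_eq_gOmega_1)

lemma tensor_gate_gH_init_state:
  assumes "y \<in> bitstrings n"
  shows "tensor_gate n gH (init_state n) y = 1 / of_real (sqrt (2 ^ n))"
proof -
  have "tensor_gate n gH (init_state n) y
      = (\<Sum>x\<in>bitstrings n. if x = replicate n False then walsh n y x else 0)"
    unfolding tensor_gate_gH[OF assms] init_state_def by (intro sum.cong) auto
  then show ?thesis by simp
qed

definition state_norm :: "nat \<Rightarrow> (bool list \<Rightarrow> complex) \<Rightarrow> real" where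
  "state_norm n \<psi> = (\<Sum>x\<in>bitstrings n. (cmod (\<psi> x))\<^sup>2)"

lemma of_real_state_norm: "of_real (state_norm n \<psi>) = (\<Sum>x\<in>bitstrings n. \<psi> x * cnj (\<psi> x))"
  unfolding state_norm_def of_real_sum by (simp only: complex_norm_square)

lemma state_norm_cong:
  "(\<And>x. x \<in> bitstrings n \<Longrightarrow> cmod (\<psi> x) = cmod (\<phi> x)) \<Longrightarrow> state_norm n \<psi> = state_norm n \<phi>"
  unfolding state_norm_def by (rule sum.cong) auto

lemma state_norm_walsh_transform:
  "state_norm n (\<lambda>y. \<Sum>x\<in>bitstrings n. walsh n y x * \<psi> x) = state_norm n \<psi>"
proof -
  let ?B = "bitstrings n"
  have "of_real (state_norm n (\<lambda>y. \<Sum>x\<in>?B. walsh n y x * \<psi> x))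
      = (\<Sum>y\<in>?B. \<Sum>w\<in>?B. \<Sum>x\<in>?B. \<psi> x * cnj (\<psi> w) * (walsh n y x * walsh n y w))"
    by (simp add: of_real_state_norm cnj_sum sum_distrib_left sum_distrib_right mult_ac)
  also have "\<dots> = (\<Sum>w\<in>?B. \<Sum>x\<in>?B. \<Sum>y\<in>?B. \<psi> x * cnj (\<psi> w) * (walsh n y x * walsh n y w))"
    by (subst sum.swap) (intro sum.cong refl sum.swap)
  also have "\<dots> = (\<Sum>w\<in>?B. \<Sum>x\<in>?B. \<psi> x * cnj (\<psi> w) * (\<Sum>y\<in>?B. walsh n y x * walsh n y w))"
    by (simp only: sum_distrib_left)
  also have "\<dots> = (\<Sum>w\<in>?B. \<Sum>x\<in>?B. if x = w then \<psi> x * cnj (\<psi> w) else 0)"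
    by (intro sum.cong refl) (simp add: sum_walsh_orthonormal)
  also have "\<dots> = of_real (state_norm n \<psi>)"
    by (simp add: of_real_state_norm)
  finally show ?thesis by (simp only: of_real_eq_iff)
qed

lemma state_norm_phase_oracle: "state_norm n (phase_oracle f \<psi>) = state_norm n \<psi>"
  by (rule state_norm_cong) (simp add: phase_oracle_def norm_mult)

lemma state_norm_tensor_gate_gOmega:
  assumes "cmod z = 1"
  shows "state_norm n (tensor_gate n (gOmega z) \<psi>) = state_norm n \<psi>"
proof -
  have "state_norm n (tensor_gate n (gOmega z) \<psi>)
      = state_norm n (\<lambda>y. \<Sum>x\<in>bitstrings n. walsh n y x * (z ^ wt x * \<psi> x))"
    by (rule state_norm_cong) (simp add: tensor_gate_gOmega)
  also have "\<dots> = state_norm n (\<lambda>x. z ^ wt x * \<psi> x)"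
    by (rule state_norm_walsh_transform)
  also have "\<dots> = state_norm n \<psi>"
    by (rule state_norm_cong) (simp add: norm_mult norm_power assms)
  finally show ?thesis .
qed

lemma state_norm_tensor_gate_gH: "state_norm n (tensor_gate n gH \<psi>) = state_norm n \<psi>"
  by (simp add: gH_eq_gOmega_1 state_norm_tensor_gate_gOmega)

lemma state_norm_init_state: "state_norm n (init_state n) = 1"
proof -
  have "state_norm n (init_state n) = (\<Sum>x\<in>bitstrings n. if x = replicate n False then 1 else 0)"
    unfolding state_norm_def init_state_def by (intro sum.cong) auto
  then show ?thesis by simp
qed

lemma norm_zeta: "cmod (zeta m) = 1"
proof -
  have "zeta m = exp (\<i> * of_real (2 * pi / real m))"
    by (simp add: zeta_def mult_ac)
  then show ?thesis by simp
qed

lemma tensor_gate_gOmega_zeta_eq_mhadamard: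
  assumes "y \<in> bitstrings n"
  shows "tensor_gate n (gOmega (zeta m)) (phase_oracle f (tensor_gate n gH (init_state n))) y
       = mhadamard m n f y / of_real (sqrt (2 ^ n))"
  unfolding tensor_gate_gOmega[OF assms] mhadamard_def
  by (auto intro!: sum.cong simp: phase_oracle_def tensor_gate_gH_init_state sum_divide_distrib
      walsh_def sgn1_neq sgn1_eq_Not dotp_commute[of y] mult_ac)

lemma tensor_gate_gOmega_cnj_at_zero:
  "tensor_gate n (gOmega (cnj z)) (phase_oracle f (tensor_gate n gH \<phi>)) (replicate n False)
     = (\<Sum>w\<in>bitstrings n. \<phi> w *
          cnj (tensor_gate n (gOmega z) (phase_oracle f (tensor_gate n gH (init_state n))) w))"
proof -
  let ?B = "bitstrings n" and ?c = "1 / of_real (sqrt (2 ^ n)) :: complex"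
  have "tensor_gate n (gOmega (cnj z)) (phase_oracle f (tensor_gate n gH \<phi>)) (replicate n False)
      = (\<Sum>x\<in>?B. ?c * (cnj z ^ wt x * (sgn1 (f x) * (\<Sum>w\<in>?B. walsh n x w * \<phi> w))))"
    unfolding tensor_gate_gOmega[OF replicate_False_in_bitstrings]
    by (intro sum.cong refl) (simp add: phase_oracle_def tensor_gate_gH)
  also have "\<dots> = (\<Sum>x\<in>?B. \<Sum>w\<in>?B. \<phi> w * (walsh n w x * cnj z ^ wt x * sgn1 (f x) * ?c))"
    by (intro sum.cong refl) (simp add: sum_distrib_left walsh_commute mult_ac)
  also have "\<dots> = (\<Sum>w\<in>?B. \<Sum>x\<in>?B. \<phi> w * (walsh n w x * cnj z ^ wt x * sgn1 (f x) * ?c))"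
    by (rule sum.swap)
  also have "\<dots> = (\<Sum>w\<in>?B. \<phi> w * (\<Sum>x\<in>?B. walsh n w x * cnj z ^ wt x * sgn1 (f x) * ?c))"
    by (simp only: sum_distrib_left)
  also have "\<dots> = (\<Sum>w\<in>?B. \<phi> w *
          cnj (tensor_gate n (gOmega z) (phase_oracle f (tensor_gate n gH (init_state n))) w))"
    by (intro sum.cong refl) (simp add: tensor_gate_gOmega phase_oracle_def
        tensor_gate_gH_init_state cnj_sum mult_ac)
  finally show ?thesis .
qed

lemma mult_conj_cmod_square: "u * cnj u = of_real ((cmod u)\<^sup>2)"
  by (metis complex_norm_square of_real_power)

lemma sum_sgn1_mem_norm_square:
  assumes "S \<subseteq> bitstrings n"
  shows "(\<Sum>w\<in>bitstrings n. sgn1 (w \<in> S) * (\<psi> w * cnj (\<psi> w)))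
       = of_real (state_norm n \<psi> - 2 * (\<Sum>w\<in>S. (cmod (\<psi> w))\<^sup>2))"
proof -
  have "(\<Sum>w\<in>bitstrings n. sgn1 (w \<in> S) * (\<psi> w * cnj (\<psi> w)))
      = of_real (\<Sum>w\<in>bitstrings n. (cmod (\<psi> w))\<^sup>2 - (if w \<in> S then 2 * (cmod (\<psi> w))\<^sup>2 else 0))"
    unfolding of_real_sum by (intro sum.cong refl) (simp add: sgn1_def mult_conj_cmod_square)
  also have "\<dots> = of_real (state_norm n \<psi> - 2 * (\<Sum>w\<in>S. (cmod (\<psi> w))\<^sup>2))"
    using assms by (simp add: state_norm_def sum_subtractf sum.inter_restrict[symmetric]
        Int_absorb1 sum_distrib_left)
  finally show ?thesis .
qed

theorem theorem7:
  fixes n m :: nat and f :: "bool list \<Rightarrow> bool" and S :: "bool list set"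
  assumes "m \<ge> 1"
    and "S \<subseteq> bitstrings n"
  defines "g \<equiv> (\<lambda>x. x \<in> S)"
    and "p \<equiv> (1 / 2 ^ n) * (\<Sum>x\<in>S. (cmod (mhadamard m n f x))\<^sup>2)"
  shows "(\<Sum>y\<in>bitstrings n - {replicate n False}. alg33_prob m n g f f y) = 4 * p - 4 * p\<^sup>2"
proof -
  define \<psi> where
    "\<psi> = tensor_gate n (gOmega (zeta m)) (phase_oracle f (tensor_gate n gH (init_state n)))"
  define \<chi> where "\<chi> = alg33_state m n g f f"
  have \<chi>_eq: "\<chi> = tensor_gate n (gOmega (cnj (zeta m)))
                    (phase_oracle f (tensor_gate n gH (phase_oracle g \<psi>)))"
    by (simp add: \<chi>_def \<psi>_def alg33_state_def)
  have norm_\<psi>: "state_norm n \<psi> = 1" and norm_\<chi>: "state_norm n \<chi> = 1"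
    by (simp_all add: \<chi>_eq \<psi>_def state_norm_tensor_gate_gOmega norm_zeta state_norm_phase_oracle
        state_norm_tensor_gate_gH state_norm_init_state)
  have "(\<Sum>w\<in>S. (cmod (\<psi> w))\<^sup>2) = p"
    using assms(2) by (auto intro!: sum.cong simp: p_def \<psi>_def sum_distrib_left
        tensor_gate_gOmega_zeta_eq_mhadamard norm_divide power_divide)
  then have amplitude_zero: "\<chi> (replicate n False) = of_real (1 - 2 * p)"
    using sum_sgn1_mem_norm_square[OF assms(2), of \<psi>]
    by (simp add: \<chi>_eq tensor_gate_gOmega_cnj_at_zero phase_oracle_def g_def norm_\<psi>
        \<psi>_def[symmetric] mult_ac)
  have "(\<Sum>y\<in>bitstrings n - {replicate n False}. alg33_prob m n g f f y)
      = state_norm n \<chi> - (cmod (\<chi> (replicate n False)))\<^sup>2"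
    by (simp add: sum_diff1 state_norm_def alg33_prob_def \<chi>_def)
  also have "\<dots> = 1 - (1 - 2 * p)\<^sup>2"
    unfolding norm_\<chi> amplitude_zero norm_of_real by simp
  finally show ?thesis
    by (simp add: power2_eq_square algebra_simps)
qed

end
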